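(* Let $\mathcal{H}=(X,\mathcal{E})$ be a hyperstar, and let $c^*\in X$ be a vertex contained in every edge of $\mathcal{H}$. Let $\mathcal{H}^-=(X\setminus\{c^*\},\{E\setminus\{c^*\}:E\in\mathcal{E}\})$. Then $\mathrm{dec}(\mathcal{H})=\tau(\mathcal{H}^-)=\tau_2(\mathcal{H})-1$ and $\overline{\chi}(\mathcal{H})=\alpha(\mathcal{H}^-)+1$.
   Context: A hypergraph $\mathcal{H}=(X,\mathcal{E})$ has a finite vertex set $X$, $|X|=n$, and edges that are subsets of $X$ with at least 2 vertices; it is a hyperstar if some vertex lies in every edge. A C-coloring is a map $\varphi:X\to\mathbb{N}$ such that every edge contains two distinct vertices of the same color; $\overline{\chi}(\mathcal{H})$ is the maximum number of colors in a C-coloring and $\mathrm{dec}(\mathcal{H})=n-\overline{\chi}(\mathcal{H})$. For a set system (possibly with edges of size 1), $\tau$ is the minimum size of a vertex set meeting every edge and $\alpha$ is the maximum size of a vertex set containing no edge entirely. $\tau_2(\mathcal{H})$ is the minimum size of a set $T\subseteq X$ with $|E\cap T|\ge 2$ for every edge $E$. *)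

theory Defs
  imports Main
begin

definition hypergraph :: "'a set \<Rightarrow> 'a set set \<Rightarrow> bool" where
  "hypergraph X Es \<longleftrightarrow> finite X \<and> (\<forall>E\<in>Es. E \<subseteq> X \<and> card E \<ge> 2)"

definition hyperstar :: "'a set \<Rightarrow> 'a set set \<Rightarrow> bool" where
  "hyperstar X Es \<longleftrightarrow> hypergraph X Es \<and> (\<exists>c\<in>X. \<forall>E\<in>Es. c \<in> E)"

definition C_coloring :: "'a set \<Rightarrow> 'a set set \<Rightarrow> ('a \<Rightarrow> nat) \<Rightarrow> bool" where
  "C_coloring X Es \<phi> \<longleftrightarrow> (\<forall>E\<in>Es. \<exists>x\<in>E. \<exists>y\<in>E. x \<noteq> y \<and> \<phi> x = \<phi> y)"

definition upper_chi :: "'a set \<Rightarrow> 'a set set \<Rightarrow> nat" where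
  "upper_chi X Es = Max {card (\<phi> ` X) | \<phi>. C_coloring X Es \<phi>}"

definition dec :: "'a set \<Rightarrow> 'a set set \<Rightarrow> nat" where
  "dec X Es = card X - upper_chi X Es"

definition tau :: "'a set \<Rightarrow> 'a set set \<Rightarrow> nat" where
  "tau V F = Min {card T | T. T \<subseteq> V \<and> (\<forall>E\<in>F. E \<inter> T \<noteq> {})}"

definition alpha :: "'a set \<Rightarrow> 'a set set \<Rightarrow> nat" where
  "alpha V F = Max {card S | S. S \<subseteq> V \<and> (\<forall>E\<in>F. \<not> E \<subseteq> S)}"

definition tau2 :: "'a set \<Rightarrow> 'a set set \<Rightarrow> nat" where
  "tau2 X Es = Min {card T | T. T \<subseteq> X \<and> (\<forall>E\<in>Es. card (E \<inter> T) \<ge> 2)}"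

end

theory Submission
  imports Defs
begin

text \<open>Write \<open>F\<close> for the link \<open>{E - {c} | E \<in> Es}\<close> of the centre \<open>c\<close>. A C-colouring \<open>\<phi>\<close> has one
  representative for each colour other than \<open>\<phi> c\<close>; these representatives form an independent
  set of \<open>F\<close>, because adding \<open>c\<close> to them gives a set on which \<open>\<phi>\<close> is injective, so it cannot
  contain an edge. Conversely, colouring an independent set of \<open>F\<close> injectively and all other
  vertices with one further colour is a C-colouring, since every edge then contains \<open>c\<close> and a
  second vertex outside the independent set. Hence \<open>upper_chi = alpha F + 1\<close>, and \<open>dec = tau F\<close>
  follows from the complementation \<open>tau F + alpha F = |X - {c}|\<close>. Finally, adding \<open>c\<close> to a
  transversal of \<open>F\<close> yields a 2-transversal, while removing \<open>c\<close> (or, if \<open>c\<close> is absent, any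
  vertex) from a 2-transversal leaves a transversal of \<open>F\<close>; so \<open>tau F = tau2 - 1\<close>.\<close>

lemma finite_cards_of_subsets:
  assumes "finite V" "\<And>T. P T \<Longrightarrow> T \<subseteq> V"
  shows "finite {card T | T. P T}"
proof -
  have "{card T | T. P T} \<subseteq> {..card V}" using assms by (auto intro: card_mono)
  then show ?thesis by (rule finite_subset) simp
qed

lemma tau_le:
  assumes "finite V" "T \<subseteq> V" "\<forall>E\<in>F. E \<inter> T \<noteq> {}"
  shows "tau V F \<le> card T"
  unfolding tau_def using assms by (intro Min_le finite_cards_of_subsets) auto

lemma tau_attained:
  assumes "finite V" "\<forall>E\<in>F. E \<subseteq> V \<and> E \<noteq> {}"
  obtains T where "T \<subseteq> V" "\<forall>E\<in>F. E \<inter> T \<noteq> {}" "card T = tau V F"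
proof -
  have "V \<subseteq> V \<and> (\<forall>E\<in>F. E \<inter> V \<noteq> {})" using assms(2) by blast
  then have "{card T | T. T \<subseteq> V \<and> (\<forall>E\<in>F. E \<inter> T \<noteq> {})} \<noteq> {}" by blast
  then have "tau V F \<in> {card T | T. T \<subseteq> V \<and> (\<forall>E\<in>F. E \<inter> T \<noteq> {})}"
    unfolding tau_def using assms(1) by (intro Min_in finite_cards_of_subsets) auto
  then show ?thesis by (auto intro: that)
qed

lemma alpha_ge:
  assumes "finite V" "S \<subseteq> V" "\<forall>E\<in>F. \<not> E \<subseteq> S"
  shows "card S \<le> alpha V F"
  unfolding alpha_def using assms by (intro Max_ge finite_cards_of_subsets) auto

lemma alpha_attained:
  assumes "finite V" "\<forall>E\<in>F. E \<noteq> {}"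
  obtains S where "S \<subseteq> V" "\<forall>E\<in>F. \<not> E \<subseteq> S" "card S = alpha V F"
proof -
  have "{} \<subseteq> V \<and> (\<forall>E\<in>F. \<not> E \<subseteq> {})" using assms(2) by blast
  then have "{card S | S. S \<subseteq> V \<and> (\<forall>E\<in>F. \<not> E \<subseteq> S)} \<noteq> {}" by blast
  then have "alpha V F \<in> {card S | S. S \<subseteq> V \<and> (\<forall>E\<in>F. \<not> E \<subseteq> S)}"
    unfolding alpha_def using assms(1) by (intro Max_in finite_cards_of_subsets) auto
  then show ?thesis by (auto intro: that)
qed

lemma tau2_le:
  assumes "finite X" "T \<subseteq> X" "\<forall>E\<in>Es. 2 \<le> card (E \<inter> T)"
  shows "tau2 X Es \<le> card T"
  unfolding tau2_def using assms by (intro Min_le finite_cards_of_subsets) auto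

lemma tau2_attained:
  assumes "finite X" "\<forall>E\<in>Es. E \<subseteq> X \<and> 2 \<le> card E"
  obtains T where "T \<subseteq> X" "\<forall>E\<in>Es. 2 \<le> card (E \<inter> T)" "card T = tau2 X Es"
proof -
  have "X \<subseteq> X \<and> (\<forall>E\<in>Es. 2 \<le> card (E \<inter> X))" using assms(2) by (simp add: Int_absorb2)
  then have "{card T | T. T \<subseteq> X \<and> (\<forall>E\<in>Es. 2 \<le> card (E \<inter> T))} \<noteq> {}" by blast
  then have "tau2 X Es \<in> {card T | T. T \<subseteq> X \<and> (\<forall>E\<in>Es. 2 \<le> card (E \<inter> T))}"
    unfolding tau2_def using assms(1) by (intro Min_in finite_cards_of_subsets) auto
  then show ?thesis by (auto intro: that)
qed

lemma finite_C_coloring_cards: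
  assumes "finite X"
  shows "finite {card (\<phi> ` X) | \<phi>. C_coloring X Es \<phi>}"
proof -
  have "{card (\<phi> ` X) | \<phi>. C_coloring X Es \<phi>} \<subseteq> {..card X}"
    using assms by (auto intro: card_image_le)
  then show ?thesis by (rule finite_subset) simp
qed

lemma upper_chi_ge:
  assumes "finite X" "C_coloring X Es \<phi>"
  shows "card (\<phi> ` X) \<le> upper_chi X Es"
  unfolding upper_chi_def using assms by (intro Max_ge finite_C_coloring_cards) auto

lemma two_elements_if_card_ge_2:
  assumes "2 \<le> card E"
  obtains x y where "x \<in> E" "y \<in> E" "x \<noteq> y"
  using assms card_le_Suc0_iff_eq[of E] by (cases "finite E") auto

lemma upper_chi_attained:
  assumes "finite X" "\<forall>E\<in>Es. 2 \<le> card E"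
  obtains \<phi> where "C_coloring X Es \<phi>" "card (\<phi> ` X) = upper_chi X Es"
proof -
  have "C_coloring X Es (\<lambda>_. 0)"
    unfolding C_coloring_def using assms(2) by (metis two_elements_if_card_ge_2)
  then have "{card (\<phi> ` X) | \<phi>. C_coloring X Es \<phi>} \<noteq> {}" by blast
  then have "upper_chi X Es \<in> {card (\<phi> ` X) | \<phi>. C_coloring X Es \<phi>}"
    unfolding upper_chi_def using assms(1) by (intro Max_in finite_C_coloring_cards) auto
  then show ?thesis by (auto intro: that)
qed

lemma tau_plus_alpha_eq_card:
  assumes "finite V" "\<forall>E\<in>F. E \<subseteq> V \<and> E \<noteq> {}"
  shows "tau V F + alpha V F = card V"
proof -
  obtain T where T: "T \<subseteq> V" "\<forall>E\<in>F. E \<inter> T \<noteq> {}" "card T = tau V F"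
    using tau_attained[OF assms] .
  have "\<forall>E\<in>F. E \<noteq> {}" using assms(2) by blast
  then obtain S where S: "S \<subseteq> V" "\<forall>E\<in>F. \<not> E \<subseteq> S" "card S = alpha V F"
    by (rule alpha_attained[OF assms(1)])
  have "\<forall>E\<in>F. \<not> E \<subseteq> V - T" using T(2) by blast
  then have alpha: "card (V - T) \<le> alpha V F" by (rule alpha_ge[OF assms(1) Diff_subset])
  have "\<forall>E\<in>F. E \<inter> (V - S) \<noteq> {}"
  proof
    fix E assume "E \<in> F"
    then have "E \<subseteq> V" "\<not> E \<subseteq> S" using S(2) assms(2) by auto
    then show "E \<inter> (V - S) \<noteq> {}" by blast
  qed
  then have tau: "tau V F \<le> card (V - S)" by (rule tau_le[OF assms(1) Diff_subset])
  have "card (V - T) = card V - card T" "card (V - S) = card V - card S"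
    using T(1) S(1) assms(1) by (simp_all add: card_Diff_subset finite_subset[OF _ assms(1)])
  moreover have "card T \<le> card V" "card S \<le> card V"
    using T(1) S(1) by (simp_all add: card_mono[OF assms(1)])
  ultimately show ?thesis using alpha tau T(3) S(3) by linarith
qed

lemma upper_chi_gt_card_if_edges_meet_complement_twice:
  assumes "finite X" "S \<subseteq> X" "x\<^sub>0 \<in> X - S"
    and "\<forall>E\<in>Es. \<exists>x\<in>E. \<exists>y\<in>E. x \<noteq> y \<and> x \<notin> S \<and> y \<notin> S"
  shows "card S + 1 \<le> upper_chi X Es"
proof -
  have "finite S" using assms(1,2) finite_subset by blast
  then obtain g :: "'a \<Rightarrow> nat" where g: "inj_on g S"
    using finite_imp_inj_to_nat_seg by meson
  define \<phi> where "\<phi> x = (if x \<in> S then Suc (g x) else 0)" for x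
  have "C_coloring X Es \<phi>"
    unfolding C_coloring_def \<phi>_def using assms(4) by fastforce
  have "inj_on \<phi> (insert x\<^sub>0 S)"
    using g assms(3) unfolding \<phi>_def inj_on_def by auto
  then have "card S + 1 = card (\<phi> ` insert x\<^sub>0 S)"
    using \<open>finite S\<close> assms(3) by (simp add: card_image)
  also have "\<dots> \<le> card (\<phi> ` X)"
    using assms(1-3) by (intro card_mono) auto
  also have "\<dots> \<le> upper_chi X Es"
    by (rule upper_chi_ge[OF assms(1) \<open>C_coloring X Es \<phi>\<close>])
  finally show ?thesis .
qed

lemma representatives_of_other_colours:
  assumes "finite X" "c \<in> X"
  obtains R where "R \<subseteq> X" "inj_on \<phi> R" "\<phi> c \<notin> \<phi> ` R" "card R = card (\<phi> ` X) - 1"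
proof
  let ?R = "inv_into X \<phi> ` (\<phi> ` X - {\<phi> c})"
  show "?R \<subseteq> X" by (auto intro: inv_into_into)
  have "\<phi> ` ?R = \<phi> ` X - {\<phi> c}"
    by (auto simp: image_image f_inv_into_f)
  then show "\<phi> c \<notin> \<phi> ` ?R" by simp
  show "inj_on \<phi> ?R" by (auto simp: inj_on_def f_inv_into_f)
  have "card ?R = card (\<phi> ` X - {\<phi> c})"
    by (rule card_image) (rule inj_on_inv_into, blast)
  then show "card ?R = card (\<phi> ` X) - 1"
    using assms by simp
qed

locale hyperstar_centre =
  fixes X :: "'a set" and Es :: "'a set set" and c :: 'a
  assumes hypergraph: "hypergraph X Es"
    and centre_in_vertices: "c \<in> X"
    and centre_in_edges: "\<And>E. E \<in> Es \<Longrightarrow> c \<in> E"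
begin

abbreviation link :: "'a set set" where
  "link \<equiv> (\<lambda>E. E - {c}) ` Es"

lemma finite_vertices: "finite X"
  using hypergraph unfolding hypergraph_def by blast

lemma finite_link_vertices: "finite (X - {c})"
  using finite_vertices by blast

lemma edges_subset_card_ge_2: "\<forall>E\<in>Es. E \<subseteq> X \<and> 2 \<le> card E"
  using hypergraph unfolding hypergraph_def by blast

lemma card_edges_ge_2: "\<forall>E\<in>Es. 2 \<le> card E"
  using edges_subset_card_ge_2 by blast

lemma link_edges_subset_nonempty: "\<forall>E\<in>link. E \<subseteq> X - {c} \<and> E \<noteq> {}"
proof
  fix E' assume "E' \<in> link"
  then obtain E where E: "E \<in> Es" "E' = E - {c}" by blast
  then obtain x y where "x \<in> E" "y \<in> E" "x \<noteq> y"
    using card_edges_ge_2 two_elements_if_card_ge_2 by blast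
  then show "E' \<subseteq> X - {c} \<and> E' \<noteq> {}"
    using E edges_subset_card_ge_2 by blast
qed

lemma independent_if_rainbow_without_centre_colour:
  assumes "C_coloring X Es \<phi>" "inj_on \<phi> S" "\<phi> c \<notin> \<phi> ` S"
  shows "\<forall>E\<in>link. \<not> E \<subseteq> S"
proof (intro ballI notI)
  fix E' assume "E' \<in> link" "E' \<subseteq> S"
  then obtain E where "E \<in> Es" "E \<subseteq> insert c S" by blast
  moreover obtain x y where "x \<in> E" "y \<in> E" "x \<noteq> y" "\<phi> x = \<phi> y"
    using assms(1) \<open>E \<in> Es\<close> unfolding C_coloring_def by blast
  moreover have "inj_on \<phi> (insert c S)"
    using assms(2,3) by (simp add: inj_on_insert) blast
  ultimately show False using inj_onD[of \<phi> "insert c S" x y] by blast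
qed

lemma upper_chi_eq_alpha_link: "upper_chi X Es = alpha (X - {c}) link + 1"
proof (rule antisym)
  obtain \<phi> where \<phi>: "C_coloring X Es \<phi>" "card (\<phi> ` X) = upper_chi X Es"
    using upper_chi_attained[OF finite_vertices card_edges_ge_2] .
  obtain R where R: "R \<subseteq> X" "inj_on \<phi> R" "\<phi> c \<notin> \<phi> ` R" "card R = card (\<phi> ` X) - 1"
    using representatives_of_other_colours[OF finite_vertices centre_in_vertices] .
  have "R \<subseteq> X - {c}" using R(1,3) by auto
  then have "card R \<le> alpha (X - {c}) link"
    using independent_if_rainbow_without_centre_colour[OF \<phi>(1) R(2,3)]
    by (rule alpha_ge[OF finite_link_vertices])
  moreover have "card (\<phi> ` X) \<ge> 1"
    using finite_vertices centre_in_vertices by (auto simp: Suc_le_eq card_gt_0_iff)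
  ultimately show "upper_chi X Es \<le> alpha (X - {c}) link + 1"
    using \<phi>(2) R(4) by linarith
next
  have "\<forall>E\<in>link. E \<noteq> {}" using link_edges_subset_nonempty by blast
  then obtain S where S: "S \<subseteq> X - {c}" "\<forall>E\<in>link. \<not> E \<subseteq> S" "card S = alpha (X - {c}) link"
    by (rule alpha_attained[OF finite_link_vertices])
  have "S \<subseteq> X" "c \<in> X - S"
    using S(1) centre_in_vertices by auto
  moreover have "\<forall>E\<in>Es. \<exists>x\<in>E. \<exists>y\<in>E. x \<noteq> y \<and> x \<notin> S \<and> y \<notin> S"
  proof
    fix E assume "E \<in> Es"
    have "\<not> E - {c} \<subseteq> S" using S(2) \<open>E \<in> Es\<close> by blast
    then obtain y where "y \<in> E" "y \<noteq> c" "y \<notin> S" by blast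
    then show "\<exists>x\<in>E. \<exists>y\<in>E. x \<noteq> y \<and> x \<notin> S \<and> y \<notin> S"
      using centre_in_edges[OF \<open>E \<in> Es\<close>] S(1) by blast
  qed
  ultimately have "card S + 1 \<le> upper_chi X Es"
    by (rule upper_chi_gt_card_if_edges_meet_complement_twice[OF finite_vertices])
  then show "alpha (X - {c}) link + 1 \<le> upper_chi X Es"
    using S(3) by simp
qed

lemma dec_eq_tau_link: "dec X Es = tau (X - {c}) link"
proof -
  have "tau (X - {c}) link + alpha (X - {c}) link = card X - 1"
    using tau_plus_alpha_eq_card[OF finite_link_vertices link_edges_subset_nonempty] finite_vertices centre_in_vertices
    by simp
  then show ?thesis
    unfolding dec_def upper_chi_eq_alpha_link by linarith
qed

lemma tau2_le_tau_link: "tau2 X Es \<le> tau (X - {c}) link + 1"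
proof -
  obtain T where T: "T \<subseteq> X - {c}" "\<forall>E\<in>link. E \<inter> T \<noteq> {}" "card T = tau (X - {c}) link"
    using tau_attained[OF finite_link_vertices link_edges_subset_nonempty] .
  have "2 \<le> card (E \<inter> insert c T)" if "E \<in> Es" for E
  proof -
    have "(E - {c}) \<inter> T \<noteq> {}" using T(2) that by blast
    then obtain y where "y \<in> E" "y \<in> T" "y \<noteq> c" by blast
    have "finite (E \<inter> insert c T)"
      using T(1) finite_vertices by (meson finite_Int finite_insert finite_subset Diff_subset)
    moreover have "{c, y} \<subseteq> E \<inter> insert c T"
      using \<open>y \<in> E\<close> \<open>y \<in> T\<close> centre_in_edges[OF that] by blast
    ultimately have "card {c, y} \<le> card (E \<inter> insert c T)" by (rule card_mono)
    then show ?thesis using \<open>y \<noteq> c\<close> by simp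
  qed
  then have "tau2 X Es \<le> card (insert c T)"
    using T(1) finite_vertices centre_in_vertices by (intro tau2_le) auto
  also have "\<dots> \<le> card T + 1"
    by (simp add: card_insert_le_m1)
  finally show ?thesis using T(3) by simp
qed

lemma tau_link_le_tau2: "tau (X - {c}) link \<le> tau2 X Es - 1"
proof -
  obtain T where T: "T \<subseteq> X" "\<forall>E\<in>Es. 2 \<le> card (E \<inter> T)" "card T = tau2 X Es"
    using tau2_attained[OF finite_vertices edges_subset_card_ge_2] .
  show ?thesis
  proof (cases "T = {}")
    case True
    then have "link = {}" using T(2) by fastforce
    then show ?thesis using tau_le[OF finite_link_vertices, of "{}"] by simp
  next
    case False
    then obtain t where t: "t \<in> T" "c \<in> T \<longrightarrow> t = c" by blast
    have "(E - {c}) \<inter> (T - {t}) \<noteq> {}" if "E \<in> Es" for E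
    proof -
      have "2 \<le> card (E \<inter> T)" using T(2) that by blast
      then obtain x y where "x \<in> E \<inter> T" "y \<in> E \<inter> T" "x \<noteq> y"
        by (rule two_elements_if_card_ge_2)
      then show ?thesis using t by (cases "c \<in> T") auto
    qed
    then have "tau (X - {c}) link \<le> card (T - {t})"
      using T(1) t by (intro tau_le[OF finite_link_vertices]) auto
    then show ?thesis using T(3) t(1) by simp
  qed
qed

lemma tau_link_eq_tau2: "tau (X - {c}) link = tau2 X Es - 1"
  using tau_link_le_tau2 tau2_le_tau_link by linarith

end

theorem proposition2:
  fixes X :: "'a set" and Es :: "'a set set" and c :: 'a
  assumes "hyperstar X Es"
    and "c \<in> X"
    and "\<forall>E\<in>Es. c \<in> E"
  shows "dec X Es = tau (X - {c}) ((\<lambda>E. E - {c}) ` Es)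
       \<and> tau (X - {c}) ((\<lambda>E. E - {c}) ` Es) = tau2 X Es - 1
       \<and> upper_chi X Es = alpha (X - {c}) ((\<lambda>E. E - {c}) ` Es) + 1"
proof -
  interpret hyperstar_centre X Es c
    using assms by unfold_locales (auto simp: hyperstar_def)
  show ?thesis
    using dec_eq_tau_link tau_link_eq_tau2 upper_chi_eq_alpha_link by blast
qed

end
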